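(* Let $d\le3$. For all $E>0$ and $\tau\in[0,4-d)$ there exists a constant $C_{E,\tau}$, uniformly bounded for $E$ in compact subsets of $(0,\infty)$, such that for all $L\ge1$ and all $\eta>0$, $$\int_{\Lambda_L^*}\frac{\langle a\rangle^\tau}{|a^2-E-i\eta|^2}da\le C_{E,\tau}(1+\eta^{-2}).$$
   Context: $\Lambda_L=[-L/2,L/2)^d$, $\Lambda_L^*=(\frac1L\mathbb Z)^d$, $\int_{\Lambda_L^*}g(a)da:=|\Lambda_L|^{-1}\sum_{a\in\Lambda_L^*}g(a)$; $a^2=|a|^2$ and $\langle a\rangle=(1+|a|^2)^{1/2}$. *)

theory Defs
  imports "HOL-Analysis.Analysis"
begin

text \<open>The dual lattice point k/L of the lattice (1/L Z)^d, with k in Z^d.\<close>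
definition dual_pt :: "real \<Rightarrow> int ^ 'n \<Rightarrow> real ^ 'n" where
  "dual_pt L k = (\<chi> i. of_int (k $ i) / L)"

definition jbr :: "real ^ 'n \<Rightarrow> real" where
  "jbr a = sqrt (1 + (norm a)\<^sup>2)"

definition integrand22 :: "real \<Rightarrow> real \<Rightarrow> real \<Rightarrow> real ^ 'n \<Rightarrow> real" where
  "integrand22 E \<tau> \<eta> a =
     jbr a powr \<tau> / (cmod (complex_of_real ((norm a)\<^sup>2) - complex_of_real E - \<i> * complex_of_real \<eta>))\<^sup>2"

end

theory Submission
  imports Defs
begin

text \<open>
  With \<open>y = |a|\<close>, split at \<open>y\<^sup>2 = 2E + 2\<close>: below it the denominator is at least \<open>\<eta>\<^sup>2\<close>
  and the numerator is bounded in terms of \<open>E\<close>; above it \<open>y\<^sup>2 - E \<ge> (1 + y\<^sup>2)/2\<close>. Either way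
  the integrand is at most \<open>c(E) (1 + 1/\<eta>\<^sup>2) (1 + |a|) powr (\<tau> - 4)\<close> with \<open>c\<close> polynomial in \<open>E\<close>.
  As \<open>|a\<^sub>i| \<le> |a|\<close>, this decay is dominated by the product of the \<open>(1 + |a\<^sub>i|) powr (-p)\<close> with
  \<open>p = (4 - \<tau>)/d > 1\<close> (this is where \<open>\<tau> < 4 - d\<close> enters), so the lattice sum factorises into
  \<open>d\<close> one-dimensional sums \<open>\<Sum>\<^sub>j (1 + |j|/L) powr (-p) \<le> L (1 + 2/(p - 1))\<close>, each bounded by
  comparison with an integral; the resulting factor \<open>L\<^sup>d\<close> cancels the normalisation.
\<close>

lemma one_plus_mult_le_powr:
  fixes q u :: real
  assumes "q \<ge> 0" "u < 1"
  shows "1 + q * u \<le> (1 - u) powr (-q)"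
proof -
  have "ln (1 - u) \<le> -u"
    using ln_le_minus_one[of "1 - u"] assms by simp
  then have "q * u \<le> -q * ln (1 - u)"
    using mult_left_mono[of "ln (1 - u)" "-u" q] assms by simp
  also have "1 + -q * ln (1 - u) \<le> exp (-q * ln (1 - u))"
    by (rule exp_ge_add_one_self)
  also have "\<dots> = (1 - u) powr (-q)"
    using assms by (simp add: powr_def)
  finally show ?thesis by simp
qed

lemma powr_step_le_primitive_diff:
  fixes p x \<delta> :: real
  assumes "p > 1" "x > -1" "\<delta> \<ge> 0"
  shows "\<delta> * (1 + x + \<delta>) powr (-p)
           \<le> ((1 + x) powr (1 - p) - (1 + x + \<delta>) powr (1 - p)) / (p - 1)"
proof -
  define y where "y = 1 + x + \<delta>"
  define u where "u = \<delta> / y"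
  have y: "y > 0" and u: "u < 1"
    using assms by (auto simp: y_def u_def)
  have "1 + x = (1 - u) * y"
    using y by (simp add: u_def y_def field_simps)
  then have "(1 + x) powr (1 - p) = (1 - u) powr (1 - p) * y powr (1 - p)"
    using y u by (simp add: powr_mult)
  moreover have "1 + (p - 1) * u \<le> (1 - u) powr (1 - p)"
    using one_plus_mult_le_powr[of "p - 1" u] u assms by simp
  ultimately have "(1 + (p - 1) * u) * y powr (1 - p) \<le> (1 + x) powr (1 - p)"
    by (simp add: mult_right_mono)
  moreover have "y powr (1 - p) = y * y powr (-p)"
    using y powr_add[of y 1 "-p"] by simp
  then have "(1 + (p - 1) * u) * y powr (1 - p) = y powr (1 - p) + (p - 1) * (\<delta> * y powr (-p))"
    using y by (simp add: u_def field_simps)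
  ultimately have "y powr (1 - p) + (p - 1) * (\<delta> * y powr (-p)) \<le> (1 + x) powr (1 - p)"
    by simp
  then show ?thesis
    using assms by (simp add: y_def field_simps)
qed

lemma sum_symmetric_powr_le:
  fixes L p :: real
  assumes L: "L \<ge> 1" and p: "p > 1"
  shows "(\<Sum>j\<in>{-int N..int N}. (1 + \<bar>real_of_int j\<bar> / L) powr (-p)) \<le> L * (1 + 2 / (p - 1))"
proof -
  \<comment> \<open>\<open>- F\<close> is a primitive of \<open>(1 + y) powr (-p)\<close>: the sum is compared with the integral.\<close>
  define F where "F y = (1 + y) powr (1 - p) / (p - 1)" for y :: real
  have telescope: "(\<Sum>j\<in>{-int N..int N}. (1 + \<bar>real_of_int j\<bar> / L) powr (-p))
                     \<le> L + 2 * L * (F 0 - F (real N / L))" for N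
  proof (induction N)
    case 0
    then show ?case using L by (simp add: F_def)
  next
    case (Suc N)
    have "{-int (Suc N)..int (Suc N)} = insert (-int (Suc N)) (insert (int (Suc N)) {-int N..int N})"
      by auto
    then have "(\<Sum>j\<in>{-int (Suc N)..int (Suc N)}. (1 + \<bar>real_of_int j\<bar> / L) powr (-p))
        = (\<Sum>j\<in>{-int N..int N}. (1 + \<bar>real_of_int j\<bar> / L) powr (-p))
          + 2 * (1 + real N / L + 1 / L) powr (-p)"
      by (simp add: add_divide_distrib add_ac)
    also have "(1 + real N / L + 1 / L) powr (-p) \<le> L * (F (real N / L) - F (real (Suc N) / L))"
    proof -
      have "0 \<le> real N / L"
        using L by simp
      then have N_gt: "-1 < real N / L"
        by linarith
      have "1 / L * (1 + real N / L + 1 / L) powr (-p) \<le> F (real N / L) - F (real N / L + 1 / L)"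
        using powr_step_le_primitive_diff[OF p N_gt, of "1 / L"] L
        by (simp add: F_def diff_divide_distrib add_ac)
      moreover have "real (Suc N) / L = real N / L + 1 / L"
        by (simp add: add_divide_distrib)
      ultimately show ?thesis
        using L by (simp add: field_simps)
    qed
    finally show ?case using Suc.IH by (simp add: algebra_simps)
  qed
  have "L * F (real N / L) \<ge> 0" "F 0 = 1 / (p - 1)"
    using L p by (simp_all add: F_def)
  then have "L + 2 * L * (F 0 - F (real N / L)) \<le> L * (1 + 2 / (p - 1))"
    by (simp add: algebra_simps)
  then show ?thesis
    using telescope[of N] by linarith
qed

lemma vec_box_eq_image:
  "{k :: 'a ^ 'n. \<forall>i. k $ i \<in> S} = vec_lambda ` (UNIV \<rightarrow>\<^sub>E S)"
proof (intro equalityI subsetI)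
  fix k :: "'a ^ 'n"
  assume "k \<in> {k. \<forall>i. k $ i \<in> S}"
  then have "vec_nth k \<in> UNIV \<rightarrow>\<^sub>E S" by auto
  then show "k \<in> vec_lambda ` (UNIV \<rightarrow>\<^sub>E S)"
    using image_eqI[of k vec_lambda "vec_nth k"] by simp
qed auto

lemma finite_vec_box: "finite S \<Longrightarrow> finite {k :: 'a ^ 'n. \<forall>i. k $ i \<in> S}"
  unfolding vec_box_eq_image by (simp add: finite_PiE)

lemma sum_vec_box_prod:
  fixes \<phi> :: "'a \<Rightarrow> 'b :: comm_semiring_1"
  assumes "finite S"
  shows "(\<Sum>k \<in> {k :: 'a ^ 'n. \<forall>i. k $ i \<in> S}. \<Prod>i\<in>UNIV. \<phi> (k $ i)) = (\<Sum>j\<in>S. \<phi> j) ^ CARD('n)"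
proof -
  have "inj_on vec_lambda (UNIV \<rightarrow>\<^sub>E S :: ('n \<Rightarrow> 'a) set)"
    by (auto simp: inj_on_def vec_lambda_inject)
  then have "(\<Sum>k \<in> {k :: 'a ^ 'n. \<forall>i. k $ i \<in> S}. \<Prod>i\<in>UNIV. \<phi> (k $ i))
      = (\<Sum>g \<in> UNIV \<rightarrow>\<^sub>E S. \<Prod>i\<in>(UNIV :: 'n set). \<phi> (g i))"
    unfolding vec_box_eq_image by (simp add: sum.reindex)
  also have "\<dots> = (\<Prod>i\<in>(UNIV :: 'n set). \<Sum>j\<in>S. \<phi> j)"
    using prod_sum_PiE[of "UNIV :: 'n set" "\<lambda>_. S" "\<lambda>_. \<phi>"] assms by simp
  finally show ?thesis by simp
qed

lemma finite_int_vec_subset_box: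
  fixes F :: "(int ^ 'n) set"
  assumes "finite F"
  obtains N :: nat where "F \<subseteq> {k. \<forall>i. k $ i \<in> {-int N..int N}}"
proof -
  have "finite ((\<lambda>(k, i). \<bar>k $ i\<bar>) ` (F \<times> UNIV))"
    using assms by simp
  then obtain b where "\<forall>x \<in> (\<lambda>(k, i). \<bar>k $ i\<bar>) ` (F \<times> UNIV). x \<le> b"
    using bdd_above_finite unfolding bdd_above_def by blast
  then have b: "\<And>k i. k \<in> F \<Longrightarrow> \<bar>k $ i\<bar> \<le> b"
    by auto
  have "F \<subseteq> {k. \<forall>i. k $ i \<in> {-int (nat b)..int (nat b)}}"
  proof (intro subsetI CollectI allI)
    fix k i
    assume "k \<in> F"
    then have "\<bar>k $ i\<bar> \<le> int (nat b)"
      using b[of k i] by (auto simp: int_nat_eq)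
    then show "k $ i \<in> {-int (nat b)..int (nat b)}"
      by (simp add: abs_le_iff)
  qed
  then show ?thesis by (rule that)
qed

lemma int_vec_prod_summable_on:
  fixes \<phi> :: "int \<Rightarrow> real"
  assumes nonneg: "\<And>j. 0 \<le> \<phi> j"
    and bound: "\<And>N. (\<Sum>j\<in>{-int N..int N}. \<phi> j) \<le> B"
  shows "(\<lambda>k :: int ^ 'n. \<Prod>i\<in>UNIV. \<phi> (k $ i)) summable_on UNIV"
    and "(\<Sum>\<^sub>\<infinity>k :: int ^ 'n. \<Prod>i\<in>UNIV. \<phi> (k $ i)) \<le> B ^ CARD('n)"
proof -
  define f where "f k = (\<Prod>i\<in>UNIV. \<phi> (k $ i))" for k :: "int ^ 'n"
  have f_nonneg: "0 \<le> f k" for k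
    unfolding f_def by (simp add: nonneg prod_nonneg)
  have partial_sums: "sum f F \<le> B ^ CARD('n)" if "finite F" for F
  proof -
    obtain N :: nat where N: "F \<subseteq> {k. \<forall>i. k $ i \<in> {-int N..int N}}"
      using finite_int_vec_subset_box[OF \<open>finite F\<close>] by blast
    have "sum f F \<le> sum f {k. \<forall>i. k $ i \<in> {-int N..int N}}"
      by (rule sum_mono2[OF finite_vec_box N]) (auto simp: f_nonneg)
    also have "\<dots> = (\<Sum>j\<in>{-int N..int N}. \<phi> j) ^ CARD('n)"
      unfolding f_def by (rule sum_vec_box_prod) simp
    also have "\<dots> \<le> B ^ CARD('n)"
      by (rule power_mono[OF bound]) (simp add: nonneg sum_nonneg)
    finally show ?thesis .
  qed
  show summable: "f summable_on UNIV"
    by (rule nonneg_bdd_above_summable_on) (auto simp: f_nonneg intro!: bdd_aboveI2 partial_sums)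
  show "infsum f UNIV \<le> B ^ CARD('n)"
    by (rule infsum_le_finite_sums[OF summable partial_sums])
qed

lemma sq_one_plus_le_resolvent_denominator:
  fixes x E \<eta> :: real
  assumes x: "x \<ge> 0" and \<eta>: "\<eta> \<noteq> 0"
  shows "(1 + x)\<^sup>2 \<le> (4 + (3 + 2 * E)\<^sup>2) * (1 + 1 / \<eta>\<^sup>2) * ((x - E)\<^sup>2 + \<eta>\<^sup>2)"
proof (cases "x \<le> 2 * E + 2")
  case True
  then have "(1 + x)\<^sup>2 \<le> (3 + 2 * E)\<^sup>2"
    using x by (intro power_mono) auto
  also have "\<dots> = (3 + 2 * E)\<^sup>2 * (1 / \<eta>\<^sup>2) * \<eta>\<^sup>2"
    using \<eta> by simp
  also have "\<dots> \<le> (4 + (3 + 2 * E)\<^sup>2) * (1 + 1 / \<eta>\<^sup>2) * ((x - E)\<^sup>2 + \<eta>\<^sup>2)"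
    by (intro mult_mono) auto
  finally show ?thesis .
next
  case False
  then have "(1 + x)\<^sup>2 \<le> (2 * (x - E))\<^sup>2"
    using x by (intro power_mono) auto
  also have "\<dots> \<le> 4 * ((x - E)\<^sup>2 + \<eta>\<^sup>2)"
    unfolding power_mult_distrib by simp
  also have "\<dots> \<le> (4 + (3 + 2 * E)\<^sup>2) * (1 + 1 / \<eta>\<^sup>2) * ((x - E)\<^sup>2 + \<eta>\<^sup>2)"
  proof (rule mult_right_mono)
    have "4 * 1 \<le> (4 + (3 + 2 * E)\<^sup>2) * (1 + 1 / \<eta>\<^sup>2)"
      by (intro mult_mono) auto
    then show "4 \<le> (4 + (3 + 2 * E)\<^sup>2) * (1 + 1 / \<eta>\<^sup>2)" by simp
  qed simp
  finally show ?thesis .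
qed

lemma sqrt_one_plus_sq_powr_mult_le:
  fixes y \<tau> :: real
  assumes y: "y \<ge> 0" and \<tau>: "0 \<le> \<tau>" "\<tau> \<le> 4"
  shows "sqrt (1 + y\<^sup>2) powr \<tau> * (1 + y) powr (4 - \<tau>) \<le> 4 * (1 + y\<^sup>2)\<^sup>2"
proof -
  define J where "J = sqrt (1 + y\<^sup>2)"
  have J: "J > 0"
    unfolding J_def by (simp add: add_pos_nonneg)
  have "(1 + y)\<^sup>2 \<le> 2 * (1 + y\<^sup>2)"
    using zero_le_power2[of "y - 1"] by (simp add: power2_eq_square algebra_simps)
  then have "sqrt ((1 + y)\<^sup>2) \<le> sqrt (2 * (1 + y\<^sup>2))"
    by (rule real_sqrt_le_mono)
  then have "1 + y \<le> sqrt 2 * J"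
    using y by (simp only: J_def real_sqrt_mult real_sqrt_abs)
  then have "(1 + y) powr (4 - \<tau>) \<le> sqrt 2 powr (4 - \<tau>) * J powr (4 - \<tau>)"
    using y \<tau> J by (simp add: powr_mono2 powr_mult[symmetric])
  also have "\<dots> \<le> 4 * J powr (4 - \<tau>)"
  proof (rule mult_right_mono)
    have "sqrt 2 powr (4 - \<tau>) \<le> sqrt 2 powr 4"
      using \<tau> by (intro powr_mono) auto
    also have "sqrt 2 powr 4 = 4"
      by (simp add: powr_half_sqrt[symmetric] powr_powr)
    finally show "sqrt 2 powr (4 - \<tau>) \<le> 4" .
  qed simp
  finally have "J powr \<tau> * (1 + y) powr (4 - \<tau>) \<le> 4 * (J powr \<tau> * J powr (4 - \<tau>))"
    by (simp add: mult_left_mono mult.left_commute)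
  also have "J powr \<tau> * J powr (4 - \<tau>) = (1 + y\<^sup>2)\<^sup>2"
    using J by (simp add: powr_add[symmetric] powr_numeral J_def numeral_eq_Suc)
  finally show ?thesis
    unfolding J_def .
qed

lemma integrand22_le_decay:
  fixes a :: "real ^ 'n"
  assumes \<tau>: "0 \<le> \<tau>" "\<tau> \<le> 4" and \<eta>: "\<eta> \<noteq> 0"
  shows "integrand22 E \<tau> \<eta> a
           \<le> 4 * (4 + (3 + 2 * E)\<^sup>2) * (1 + 1 / \<eta>\<^sup>2) * (1 + norm a) powr (-(4 - \<tau>))"
proof -
  define y where "y = norm a"
  define D where "D = ((y\<^sup>2 - E)\<^sup>2 + \<eta>\<^sup>2)"
  define K where "K = 4 * (4 + (3 + 2 * E)\<^sup>2) * (1 + 1 / \<eta>\<^sup>2)"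
  have y: "y \<ge> 0" and D: "D > 0"
    using \<eta> by (auto simp: y_def D_def add_nonneg_pos)
  then have decay: "(1 + y) powr (4 - \<tau>) > 0"
    by simp
  have "integrand22 E \<tau> \<eta> a = sqrt (1 + y\<^sup>2) powr \<tau> / D"
    by (simp add: integrand22_def jbr_def cmod_power2 y_def D_def)
  also have "\<dots> \<le> K / (1 + y) powr (4 - \<tau>)"
  proof -
    have "sqrt (1 + y\<^sup>2) powr \<tau> * (1 + y) powr (4 - \<tau>) \<le> 4 * (1 + y\<^sup>2)\<^sup>2"
      using sqrt_one_plus_sq_powr_mult_le[OF y \<tau>] .
    also have "\<dots> \<le> 4 * ((4 + (3 + 2 * E)\<^sup>2) * (1 + 1 / \<eta>\<^sup>2) * D)"
      unfolding D_def using \<eta> by (intro mult_left_mono sq_one_plus_le_resolvent_denominator) auto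
    also have "\<dots> = K * D"
      by (simp add: K_def)
    finally show ?thesis
      using D decay by (simp add: divide_simps mult.commute)
  qed
  also have "\<dots> = K * (1 + y) powr (-(4 - \<tau>))"
    by (simp only: powr_minus_divide) simp
  finally show ?thesis
    by (simp only: K_def y_def)
qed

lemma one_plus_norm_powr_le_prod:
  fixes a :: "real ^ 'n" and p :: real
  assumes "p \<ge> 0"
  shows "(1 + norm a) powr (-(CARD('n) * p)) \<le> (\<Prod>i\<in>UNIV. (1 + \<bar>a $ i\<bar>) powr (-p))"
proof -
  have "(1 + norm a) powr (-(CARD('n) * p)) = (\<Prod>i\<in>(UNIV :: 'n set). (1 + norm a) powr (-p))"
    using powr_power[of "1 + norm a" "-p" "CARD('n)"] norm_ge_zero[of a] by simp
  also have "\<dots> \<le> (\<Prod>i\<in>UNIV. (1 + \<bar>a $ i\<bar>) powr (-p))"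
  proof (intro prod_mono conjI)
    fix i
    show "(1 + norm a) powr (-p) \<le> (1 + \<bar>a $ i\<bar>) powr (-p)"
      using assms component_le_norm_cart[of a i] by (intro powr_mono2') auto
  qed simp
  finally show ?thesis .
qed

lemma integrand22_dual_pt_le_prod:
  fixes k :: "int ^ 'n"
  assumes \<tau>: "0 \<le> \<tau>" "\<tau> \<le> 4" and \<eta>: "\<eta> \<noteq> 0" and L: "L > 0"
  shows "integrand22 E \<tau> \<eta> (dual_pt L k) \<le> 4 * (4 + (3 + 2 * E)\<^sup>2) * (1 + 1 / \<eta>\<^sup>2)
           * (\<Prod>i\<in>UNIV. (1 + \<bar>real_of_int (k $ i)\<bar> / L) powr (-((4 - \<tau>) / CARD('n))))"
proof -
  have "(1 + norm (dual_pt L k)) powr (-(4 - \<tau>))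
      \<le> (\<Prod>i\<in>UNIV. (1 + \<bar>dual_pt L k $ i\<bar>) powr (-((4 - \<tau>) / CARD('n))))"
    using one_plus_norm_powr_le_prod[of "(4 - \<tau>) / CARD('n)" "dual_pt L k"] \<tau> by simp
  also have "\<dots> = (\<Prod>i\<in>UNIV. (1 + \<bar>real_of_int (k $ i)\<bar> / L) powr (-((4 - \<tau>) / CARD('n))))"
    using L by (simp add: dual_pt_def abs_divide)
  finally have "4 * (4 + (3 + 2 * E)\<^sup>2) * (1 + 1 / \<eta>\<^sup>2) * (1 + norm (dual_pt L k)) powr (-(4 - \<tau>))
      \<le> 4 * (4 + (3 + 2 * E)\<^sup>2) * (1 + 1 / \<eta>\<^sup>2)
           * (\<Prod>i\<in>UNIV. (1 + \<bar>real_of_int (k $ i)\<bar> / L) powr (-((4 - \<tau>) / CARD('n))))"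
    by (rule mult_left_mono) simp
  with integrand22_le_decay[OF \<tau> \<eta>, of E "dual_pt L k"] show ?thesis
    by linarith
qed

definition lattice_resolvent_const :: "nat \<Rightarrow> real \<Rightarrow> real \<Rightarrow> real" where
  "lattice_resolvent_const d E \<tau> = 4 * (4 + (3 + 2 * E)\<^sup>2) * (1 + 2 / ((4 - \<tau>) / d - 1)) ^ d"

lemma lattice_sum_integrand22_le:
  assumes \<tau>: "0 \<le> \<tau>" "\<tau> < 4 - real CARD('n)" and \<eta>: "\<eta> \<noteq> 0" and L: "L \<ge> 1"
  shows "(\<lambda>k::int^'n. integrand22 E \<tau> \<eta> (dual_pt L k)) summable_on UNIV"
    and "(1 / L ^ CARD('n)) * (\<Sum>\<^sub>\<infinity>k::int^'n. integrand22 E \<tau> \<eta> (dual_pt L k))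
           \<le> lattice_resolvent_const CARD('n) E \<tau> * (1 + 1 / \<eta>\<^sup>2)"
proof -
  define p where "p = (4 - \<tau>) / CARD('n)"
  define \<phi> where "\<phi> j = (1 + \<bar>real_of_int j\<bar> / L) powr (-p)" for j
  define K where "K = 4 * (4 + (3 + 2 * E)\<^sup>2) * (1 + 1 / \<eta>\<^sup>2)"
  define B where "B = 1 + 2 / (p - 1)"
  define g where "g k = integrand22 E \<tau> \<eta> (dual_pt L k)" for k :: "int ^ 'n"
  have p: "p > 1"
    using \<tau> by (simp add: p_def field_simps)
  have g_le: "g k \<le> K * (\<Prod>i\<in>UNIV. \<phi> (k $ i))" for k
    using integrand22_dual_pt_le_prod[of \<tau> \<eta> L E k] \<tau> \<eta> L
    by (simp add: g_def K_def \<phi>_def p_def)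
  have g_nonneg: "0 \<le> g k" for k
    by (simp add: g_def integrand22_def)
  have \<phi>_sum: "(\<lambda>k :: int ^ 'n. \<Prod>i\<in>UNIV. \<phi> (k $ i)) summable_on UNIV"
    "(\<Sum>\<^sub>\<infinity>k :: int ^ 'n. \<Prod>i\<in>UNIV. \<phi> (k $ i)) \<le> (L * B) ^ CARD('n)"
    using int_vec_prod_summable_on[of \<phi> "L * B"] sum_symmetric_powr_le[OF L p]
    by (simp_all add: \<phi>_def B_def)
  have majorant: "(\<lambda>k :: int ^ 'n. K * (\<Prod>i\<in>UNIV. \<phi> (k $ i))) summable_on UNIV"
    by (rule summable_on_cmult_right[OF \<phi>_sum(1)])
  show summable: "g summable_on UNIV"
    by (rule summable_on_comparison_test[OF majorant g_le g_nonneg])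
  have "infsum g UNIV \<le> (\<Sum>\<^sub>\<infinity>k :: int ^ 'n. K * (\<Prod>i\<in>UNIV. \<phi> (k $ i)))"
    by (rule infsum_mono[OF summable majorant g_le])
  also have "\<dots> \<le> K * (L * B) ^ CARD('n)"
    using \<phi>_sum by (simp add: infsum_cmult_right' K_def mult_left_mono)
  finally show "(1 / L ^ CARD('n)) * infsum g UNIV \<le> lattice_resolvent_const CARD('n) E \<tau> * (1 + 1 / \<eta>\<^sup>2)"
    using L by (simp add: lattice_resolvent_const_def K_def B_def p_def power_mult_distrib
        divide_simps mult_ac)
qed

theorem lemma22:
  fixes dummy :: "'n::finite itself"
  assumes "CARD('n) \<le> 3"
  shows "\<exists>C :: real \<Rightarrow> real \<Rightarrow> real.
     (\<forall>\<tau>\<in>{0..<4 - real CARD('n)}. \<forall>K. compact K \<and> K \<subseteq> {0<..} \<longrightarrow>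
         bdd_above ((\<lambda>E. C E \<tau>) ` K)) \<and>
     (\<forall>E>0. \<forall>\<tau>\<in>{0..<4 - real CARD('n)}. \<forall>L::real. L \<ge> 1 \<longrightarrow> (\<forall>\<eta>>0.
         (\<lambda>k::int^'n. integrand22 E \<tau> \<eta> (dual_pt L k)) summable_on UNIV \<and>
         (1 / L ^ CARD('n)) * (\<Sum>\<^sub>\<infinity>k::int^'n. integrand22 E \<tau> \<eta> (dual_pt L k))
            \<le> C E \<tau> * (1 + 1 / \<eta>\<^sup>2)))"
proof (intro exI[of _ "lattice_resolvent_const CARD('n)"] conjI ballI allI impI)
  fix \<tau> :: real and K :: "real set"
  assume "compact K \<and> K \<subseteq> {0<..}"
  moreover have "continuous_on K (\<lambda>E. lattice_resolvent_const CARD('n) E \<tau>)"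
    unfolding lattice_resolvent_const_def by (intro continuous_intros)
  ultimately show "bdd_above ((\<lambda>E. lattice_resolvent_const CARD('n) E \<tau>) ` K)"
    by (meson bounded_imp_bdd_above compact_continuous_image compact_imp_bounded)
next
  fix E \<tau> L \<eta> :: real
  assume "\<tau> \<in> {0..<4 - real CARD('n)}" "L \<ge> 1" "\<eta> > 0"
  then show "(\<lambda>k::int^'n. integrand22 E \<tau> \<eta> (dual_pt L k)) summable_on UNIV"
    and "(1 / L ^ CARD('n)) * (\<Sum>\<^sub>\<infinity>k::int^'n. integrand22 E \<tau> \<eta> (dual_pt L k))
           \<le> lattice_resolvent_const CARD('n) E \<tau> * (1 + 1 / \<eta>\<^sup>2)"
    using lattice_sum_integrand22_le[of \<tau> \<eta> L E] by auto
qed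

end
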